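(* Let $\Gamma$ be a graph of order $n$, minimum degree $\delta$ and maximum degree $\Delta$. (1) For every $k\in\{2-\Delta,\dots,\Delta\}$, $n-\alpha_{\lfloor\frac{\Delta-k}{2}\rfloor}(\Gamma)\le\gamma_k^o(\Gamma)$. (2) For every $k\in\{1,\dots,\delta\}$, $\gamma_k^o(\Gamma)\le n-\alpha_{\lfloor\frac{\delta-k}{2}\rfloor}(\Gamma)$. (3) If $\Gamma$ is $\delta$-regular with $\delta>0$, then for every $k\in\{1,\dots,\delta\}$, $\gamma_k^o(\Gamma)=n-\alpha_{\lfloor\frac{\delta-k}{2}\rfloor}(\Gamma)$.
   Context: Graphs are finite and simple. For $S\subseteq V$ and $v\in V$, $\delta_S(v)$ is the number of neighbours of $v$ in $S$, $\overline{S}=V\setminus S$, and $\partial(S)$ is the set of vertices of $\overline{S}$ with a neighbour in $S$. For an integer $k$, a nonempty $S\subseteq V$ is an offensive $k$-alliance if $\delta_S(v)\ge\delta_{\overline{S}}(v)+k$ for all $v\in\partial(S)$, and a global offensive $k$-alliance if moreover it is dominating. $\gamma_k^o(\Gamma)$ is the minimum cardinality of a global offensive $k$-alliance. A set $S$ is $r$-dependent if $\delta_S(v)\le r$ for all $v\in S$; $\alpha_r(\Gamma)$ is the maximum cardinality of an $r$-dependent set in $\Gamma$. *)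

theory Defs
  imports Main
begin

definition simple_graph :: "'a set \<Rightarrow> ('a \<Rightarrow> 'a \<Rightarrow> bool) \<Rightarrow> bool" where
  "simple_graph V E \<longleftrightarrow> finite V \<and> (\<forall>u v. E u v \<longrightarrow> u \<in> V \<and> v \<in> V)
     \<and> (\<forall>u v. E u v \<longrightarrow> E v u) \<and> (\<forall>v. \<not> E v v)"

definition degree :: "'a set \<Rightarrow> ('a \<Rightarrow> 'a \<Rightarrow> bool) \<Rightarrow> 'a \<Rightarrow> nat" where
  "degree V E v = card {u \<in> V. E v u}"

definition max_degree :: "'a set \<Rightarrow> ('a \<Rightarrow> 'a \<Rightarrow> bool) \<Rightarrow> nat" where
  "max_degree V E = Max (degree V E ` V)"

definition min_degree :: "'a set \<Rightarrow> ('a \<Rightarrow> 'a \<Rightarrow> bool) \<Rightarrow> nat" where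
  "min_degree V E = Min (degree V E ` V)"

definition regular :: "'a set \<Rightarrow> ('a \<Rightarrow> 'a \<Rightarrow> bool) \<Rightarrow> nat \<Rightarrow> bool" where
  "regular V E d \<longleftrightarrow> (\<forall>v\<in>V. degree V E v = d)"

definition nbrs_in :: "('a \<Rightarrow> 'a \<Rightarrow> bool) \<Rightarrow> 'a set \<Rightarrow> 'a \<Rightarrow> int" where
  "nbrs_in E S v = int (card {u \<in> S. E v u})"

definition boundary :: "'a set \<Rightarrow> ('a \<Rightarrow> 'a \<Rightarrow> bool) \<Rightarrow> 'a set \<Rightarrow> 'a set" where
  "boundary V E S = {v \<in> V - S. \<exists>u\<in>S. E v u}"

definition offensive_alliance :: "'a set \<Rightarrow> ('a \<Rightarrow> 'a \<Rightarrow> bool) \<Rightarrow> int \<Rightarrow> 'a set \<Rightarrow> bool" where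
  "offensive_alliance V E k S \<longleftrightarrow> S \<subseteq> V \<and> S \<noteq> {} \<and>
     (\<forall>v\<in>boundary V E S. nbrs_in E S v \<ge> nbrs_in E (V - S) v + k)"

definition dominating :: "'a set \<Rightarrow> ('a \<Rightarrow> 'a \<Rightarrow> bool) \<Rightarrow> 'a set \<Rightarrow> bool" where
  "dominating V E S \<longleftrightarrow> S \<subseteq> V \<and> (\<forall>v\<in>V - S. \<exists>u\<in>S. E v u)"

definition global_offensive_alliance :: "'a set \<Rightarrow> ('a \<Rightarrow> 'a \<Rightarrow> bool) \<Rightarrow> int \<Rightarrow> 'a set \<Rightarrow> bool" where
  "global_offensive_alliance V E k S \<longleftrightarrow> offensive_alliance V E k S \<and> dominating V E S"

definition gamma_o :: "'a set \<Rightarrow> ('a \<Rightarrow> 'a \<Rightarrow> bool) \<Rightarrow> int \<Rightarrow> nat" where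
  "gamma_o V E k = Min (card ` {S. global_offensive_alliance V E k S})"

definition r_dependent :: "'a set \<Rightarrow> ('a \<Rightarrow> 'a \<Rightarrow> bool) \<Rightarrow> int \<Rightarrow> 'a set \<Rightarrow> bool" where
  "r_dependent V E r S \<longleftrightarrow> S \<subseteq> V \<and> (\<forall>v\<in>S. nbrs_in E S v \<le> r)"

definition alpha_dep :: "'a set \<Rightarrow> ('a \<Rightarrow> 'a \<Rightarrow> bool) \<Rightarrow> int \<Rightarrow> nat" where
  "alpha_dep V E r = Max (card ` {S. r_dependent V E r S})"

end

theory Submission
  imports Defs
begin

text \<open>At a vertex \<open>v \<notin> S\<close> we have \<open>\<delta>\<^sub>S(v) + \<delta>\<^sub>V\<^sub>-\<^sub>S(v) = deg v\<close>, so the offensive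
  condition \<open>\<delta>\<^sub>S(v) \<ge> \<delta>\<^sub>V\<^sub>-\<^sub>S(v) + k\<close> at a vertex of degree at most \<open>d\<close> forces
  \<open>\<delta>\<^sub>V\<^sub>-\<^sub>S(v) \<le> \<lfloor>(d - k)/2\<rfloor>\<close>, and conversely at a vertex of degree at least \<open>d\<close>
  that bound implies the offensive condition. Hence complements of global offensive
  \<open>k\<close>-alliances are \<open>\<lfloor>(\<Delta> - k)/2\<rfloor>\<close>-dependent, and for \<open>k \<ge> 1\<close> complements of
  \<open>\<lfloor>(\<delta> - k)/2\<rfloor>\<close>-dependent sets are global offensive \<open>k\<close>-alliances (they dominate
  because \<open>\<delta>\<^sub>S(v) \<ge> k > 0\<close>). Taking extremal sets gives both bounds, which coincide
  when \<open>\<delta> = \<Delta>\<close>.\<close>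

lemma nbrs_in_add_nbrs_in_Diff:
  assumes "simple_graph V E" "S \<subseteq> V"
  shows "nbrs_in E S v + nbrs_in E (V - S) v = int (degree V E v)"
proof -
  have "finite V" using assms(1) by (simp add: simple_graph_def)
  have "{u \<in> V. E v u} = {u \<in> S. E v u} \<union> {u \<in> V - S. E v u}" using assms(2) by auto
  moreover have "card ({u \<in> S. E v u} \<union> {u \<in> V - S. E v u})
      = card {u \<in> S. E v u} + card {u \<in> V - S. E v u}"
    by (rule card_Un_disjoint) (use \<open>finite V\<close> assms(2) in \<open>auto intro: finite_subset\<close>)
  ultimately show ?thesis by (simp add: nbrs_in_def degree_def)
qed

lemma nbrs_in_nonneg: "0 \<le> nbrs_in E S v"
  by (simp add: nbrs_in_def)

lemma degree_le_max_degree: "simple_graph V E \<Longrightarrow> v \<in> V \<Longrightarrow> degree V E v \<le> max_degree V E"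
  unfolding max_degree_def simple_graph_def by (rule Max_ge) auto

lemma min_degree_le_degree: "simple_graph V E \<Longrightarrow> v \<in> V \<Longrightarrow> min_degree V E \<le> degree V E v"
  unfolding min_degree_def simple_graph_def by (rule Min_le) auto

lemma max_degree_eq_min_degree_if_regular:
  "regular V E (min_degree V E) \<Longrightarrow> V \<noteq> {} \<Longrightarrow> max_degree V E = min_degree V E"
proof -
  assume "regular V E (min_degree V E)" "V \<noteq> {}"
  then have "degree V E ` V = {min_degree V E}" by (auto simp: regular_def)
  then show ?thesis by (simp add: max_degree_def)
qed

lemma card_Diff_add_card:
  "finite V \<Longrightarrow> S \<subseteq> V \<Longrightarrow> card (V - S) + card S = card V"
  by (metis card_Diff_subset card_mono finite_subset le_add_diff_inverse2)

lemma finite_global_offensive_alliances: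
  "finite V \<Longrightarrow> finite {S. global_offensive_alliance V E k S}"
  by (rule finite_subset[of _ "Pow V"])
    (auto simp: global_offensive_alliance_def offensive_alliance_def)

lemma finite_r_dependent_sets: "finite V \<Longrightarrow> finite {S. r_dependent V E r S}"
  by (rule finite_subset[of _ "Pow V"]) (auto simp: r_dependent_def)

lemma gamma_o_le_card:
  "finite V \<Longrightarrow> global_offensive_alliance V E k S \<Longrightarrow> gamma_o V E k \<le> card S"
  unfolding gamma_o_def by (rule Min_le) (auto simp: finite_global_offensive_alliances)

lemma gamma_o_attained:
  assumes "finite V" "V \<noteq> {}"
  obtains S where "global_offensive_alliance V E k S" "gamma_o V E k = card S"
proof -
  have "global_offensive_alliance V E k V"
    using assms(2) by (auto simp: global_offensive_alliance_def offensive_alliance_def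
        dominating_def boundary_def)
  then have "gamma_o V E k \<in> card ` {S. global_offensive_alliance V E k S}"
    unfolding gamma_o_def by (intro Min_in) (auto simp: finite_global_offensive_alliances assms)
  then show ?thesis using that by auto
qed

lemma card_le_alpha_dep: "finite V \<Longrightarrow> r_dependent V E r S \<Longrightarrow> card S \<le> alpha_dep V E r"
  unfolding alpha_dep_def by (rule Max_ge) (auto simp: finite_r_dependent_sets)

lemma alpha_dep_attained:
  assumes "finite V"
  obtains S where "r_dependent V E r S" "alpha_dep V E r = card S"
proof -
  have "r_dependent V E r {}" by (auto simp: r_dependent_def)
  then have "alpha_dep V E r \<in> card ` {S. r_dependent V E r S}"
    unfolding alpha_dep_def by (intro Max_in) (auto simp: finite_r_dependent_sets assms)
  then show ?thesis using that by auto
qed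

lemma r_dependent_Diff_global_offensive_alliance:
  assumes g: "simple_graph V E" and S: "global_offensive_alliance V E k S"
    and deg: "\<And>v. v \<in> V \<Longrightarrow> int (degree V E v) \<le> d"
  shows "r_dependent V E ((d - k) div 2) (V - S)"
  unfolding r_dependent_def
proof safe
  fix v assume v: "v \<in> V" "v \<notin> S"
  then obtain u where "u \<in> S" "E v u"
    using S by (auto simp: global_offensive_alliance_def dominating_def)
  with v have "v \<in> boundary V E S" by (auto simp: boundary_def)
  then have "nbrs_in E (V - S) v + k \<le> nbrs_in E S v"
    using S by (auto simp: global_offensive_alliance_def offensive_alliance_def)
  moreover have "nbrs_in E S v + nbrs_in E (V - S) v = int (degree V E v)"
    using S g by (auto simp: global_offensive_alliance_def offensive_alliance_def
        intro: nbrs_in_add_nbrs_in_Diff)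
  ultimately show "nbrs_in E (V - S) v \<le> (d - k) div 2"
    using deg[OF v(1)] by presburger
qed

lemma global_offensive_alliance_Diff_r_dependent:
  assumes g: "simple_graph V E" and "V \<noteq> {}" and k: "1 \<le> k"
    and deg: "\<And>v. v \<in> V \<Longrightarrow> d \<le> int (degree V E v)"
    and D: "r_dependent V E ((d - k) div 2) D"
  shows "global_offensive_alliance V E k (V - D)"
proof -
  have DV: "D \<subseteq> V" using D by (simp add: r_dependent_def)
  then have VVD: "V - (V - D) = D" by auto
  have offensive: "nbrs_in E D v + k \<le> nbrs_in E (V - D) v" if v: "v \<in> D" for v
  proof -
    have "nbrs_in E D v \<le> (d - k) div 2" using D v by (simp add: r_dependent_def)
    moreover have "nbrs_in E (V - D) v + nbrs_in E D v = int (degree V E v)"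
      using nbrs_in_add_nbrs_in_Diff[OF g, of "V - D"] VVD by auto
    moreover have "d \<le> int (degree V E v)" using DV v deg by blast
    ultimately show ?thesis by presburger
  qed
  have adjacent: "\<exists>u\<in>V - D. E v u" if "v \<in> D" for v
  proof -
    have "0 < nbrs_in E (V - D) v"
      using offensive[OF that] nbrs_in_nonneg[of E D v] k by linarith
    then have "{u \<in> V - D. E v u} \<noteq> {}" unfolding nbrs_in_def by (metis card.empty of_nat_0 less_irrefl)
    then show ?thesis by blast
  qed
  have "V - D \<noteq> {}"
  proof
    assume "V - D = {}"
    moreover obtain v where "v \<in> D" using \<open>V \<noteq> {}\<close> \<open>V - D = {}\<close> by auto
    ultimately show False using adjacent by blast
  qed
  then show ?thesis
    using offensive adjacent VVD
    by (auto simp: global_offensive_alliance_def offensive_alliance_def dominating_def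
        boundary_def)
qed

lemma card_minus_alpha_dep_le_gamma_o:
  assumes g: "simple_graph V E" and "V \<noteq> {}"
  shows "int (card V) - int (alpha_dep V E ((int (max_degree V E) - k) div 2))
    \<le> int (gamma_o V E k)"
proof -
  have "finite V" using g by (simp add: simple_graph_def)
  obtain S where S: "global_offensive_alliance V E k S" "gamma_o V E k = card S"
    using gamma_o_attained[OF \<open>finite V\<close> \<open>V \<noteq> {}\<close>] .
  have "r_dependent V E ((int (max_degree V E) - k) div 2) (V - S)"
    using degree_le_max_degree[OF g] by (intro r_dependent_Diff_global_offensive_alliance[OF g S(1)]) auto
  then have "card (V - S) \<le> alpha_dep V E ((int (max_degree V E) - k) div 2)"
    by (rule card_le_alpha_dep[OF \<open>finite V\<close>])
  moreover have "card (V - S) + card S = card V"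
    using S(1) \<open>finite V\<close> card_Diff_add_card
    by (auto simp: global_offensive_alliance_def offensive_alliance_def)
  ultimately show ?thesis using S(2) by linarith
qed

lemma gamma_o_le_card_minus_alpha_dep:
  assumes g: "simple_graph V E" and "V \<noteq> {}" and "1 \<le> k"
  shows "int (gamma_o V E k)
    \<le> int (card V) - int (alpha_dep V E ((int (min_degree V E) - k) div 2))"
proof -
  have "finite V" using g by (simp add: simple_graph_def)
  obtain D where D: "r_dependent V E ((int (min_degree V E) - k) div 2) D"
    "alpha_dep V E ((int (min_degree V E) - k) div 2) = card D"
    using alpha_dep_attained[OF \<open>finite V\<close>] .
  have "global_offensive_alliance V E k (V - D)"
    using min_degree_le_degree[OF g]
    by (intro global_offensive_alliance_Diff_r_dependent[OF g \<open>V \<noteq> {}\<close> \<open>1 \<le> k\<close> _ D(1)]) auto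
  then have "gamma_o V E k \<le> card (V - D)" by (rule gamma_o_le_card[OF \<open>finite V\<close>])
  moreover have "card (V - D) + card D = card V"
    using D(1) \<open>finite V\<close> card_Diff_add_card by (auto simp: r_dependent_def)
  ultimately show ?thesis using D(2) by linarith
qed

theorem mainTheorem3:
  fixes V :: "'a set" and E :: "'a \<Rightarrow> 'a \<Rightarrow> bool"
  assumes "simple_graph V E" and "V \<noteq> {}"
  defines "n \<equiv> int (card V)"
    and "\<Delta> \<equiv> int (max_degree V E)"
    and "\<delta> \<equiv> int (min_degree V E)"
  shows "(\<forall>k::int. 2 - \<Delta> \<le> k \<and> k \<le> \<Delta> \<longrightarrow>
            n - int (alpha_dep V E ((\<Delta> - k) div 2)) \<le> int (gamma_o V E k))
       \<and> (\<forall>k::int. 1 \<le> k \<and> k \<le> \<delta> \<longrightarrow>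
            int (gamma_o V E k) \<le> n - int (alpha_dep V E ((\<delta> - k) div 2)))
       \<and> (regular V E (min_degree V E) \<and> \<delta> > 0 \<longrightarrow>
            (\<forall>k::int. 1 \<le> k \<and> k \<le> \<delta> \<longrightarrow>
              int (gamma_o V E k) = n - int (alpha_dep V E ((\<delta> - k) div 2))))"
proof -
  have lower: "n - int (alpha_dep V E ((\<Delta> - k) div 2)) \<le> int (gamma_o V E k)" for k
    unfolding n_def \<Delta>_def using card_minus_alpha_dep_le_gamma_o[OF assms(1,2)] .
  have upper: "int (gamma_o V E k) \<le> n - int (alpha_dep V E ((\<delta> - k) div 2))" if "1 \<le> k" for k
    unfolding n_def \<delta>_def using gamma_o_le_card_minus_alpha_dep[OF assms(1,2) that] .
  have "\<Delta> = \<delta>" if "regular V E (min_degree V E)"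
    using max_degree_eq_min_degree_if_regular[OF that assms(2)] by (simp add: \<Delta>_def \<delta>_def)
  with lower upper show ?thesis by (metis order_antisym)
qed

end
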